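(* Let $m,n\ge1$ with $(m,n)=1$, let $d_1,\dots,d_{\tau(m)}$ and $e_1,\dots,e_{\tau(n)}$ be orderings of the positive divisors of $m$ and $n$, and order the divisors of $mn$ as $f_{\sigma(i,i')}=d_ie_{i'}$, where $\sigma(i,i')=(i-1)\tau(n)+i'$ (lexicographic order). With the matrices $M_i(N),D_i(N),W(N)$ defined as in the context (for $N=m$, $n$, $mn$ with these divisor orderings), we have, for all $1\le i,j,k\le\tau(m)$ and $1\le i',j',k'\le\tau(n)$, $$[M_{\sigma(i,i')}(mn)]_{\sigma(j,j'),\sigma(k,k')}=[M_i(m)]_{j,k}[M_{i'}(n)]_{j',k'},$$ $$[D_{\sigma(i,i')}(mn)]_{\sigma(j,j'),\sigma(k,k')}=[D_i(m)]_{j,k}[D_{i'}(n)]_{j',k'},$$ $$[W(mn)]_{\sigma(j,j'),\sigma(k,k')}=[W(m)]_{j,k}[W(n)]_{j',k'}.$$ That is, $M_{\sigma(i,i')}(mn)=M_i(m)\otimes M_{i'}(n)$, $D_{\sigma(i,i')}(mn)=D_i(m)\otimes D_{i'}(n)$, $W(mn)=W(m)\otimes W(n)$. Moreover $W(mn)=S(mn)$, where $[S(mn)]_{j,k}=c_{f_j}(mn/f_k)$.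
   Context: For integers $N\ge1$ and $x$, $c_N(x)=\sum_{1\le j\le N,\ (j,N)=1}e^{2\pi ijx/N}$ is the Ramanujan sum; $\phi$ is Euler's totient, $\tau(N)$ the number of divisors of $N$. Given an ordering $d_1,\dots,d_{\tau(N)}$ of the divisors of $N$, let $K_j=\{a\in\mathbb{Z}/N\mathbb{Z}:(a,N)=N/d_j\}$ (so $|K_j|=\phi(d_j)$). For $1\le i,j,k\le\tau(N)$, let $a_{i,j,k}(N)$ be the number of $(x,y)\in K_i\times K_j$ with $x+y=z$ in $\mathbb{Z}/N\mathbb{Z}$, for a fixed $z\in K_k$ (independent of the choice of $z$). Define $M_i(N)=(a_{i,j,k}(N))_{j,k}$, $W(N)=(w_{j,k})_{j,k}$ with $w_{j,k}=\phi(d_j)c_{d_k}(N/d_j)/\phi(d_k)$, and $D_i(N)=\operatorname{diag}(w_{i,1},\dots,w_{i,\tau(N)})$. *)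

theory Defs
  imports "HOL-Analysis.Analysis" "HOL-Number_Theory.Number_Theory"
begin

definition ramanujan_sum :: "nat \<Rightarrow> int \<Rightarrow> complex" where
  "ramanujan_sum N x =
     (\<Sum>j\<in>{j\<in>{1..N}. coprime j N}. exp (2 * of_real pi * \<i> * of_int (int j * x) / of_nat N))"

definition num_divisors :: "nat \<Rightarrow> nat" where
  "num_divisors N = card {e. e dvd N}"

definition divisor_ordering :: "nat \<Rightarrow> (nat \<Rightarrow> nat) \<Rightarrow> bool" where
  "divisor_ordering N d \<longleftrightarrow> bij_betw d {1..num_divisors N} {e. e dvd N}"

definition Kset :: "nat \<Rightarrow> (nat \<Rightarrow> nat) \<Rightarrow> nat \<Rightarrow> nat set" where
  "Kset N d j = {a. a < N \<and> gcd a N = N div d j}"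

text \<open>a_{i,j,k}(N): number of (x,y) in K_i x K_j with x+y = z mod N, for the fixed
  representative z = N/d_k (mod N) of K_k.\<close>
definition acount :: "nat \<Rightarrow> (nat \<Rightarrow> nat) \<Rightarrow> nat \<Rightarrow> nat \<Rightarrow> nat \<Rightarrow> nat" where
  "acount N d i j k =
     card {(x, y). x \<in> Kset N d i \<and> y \<in> Kset N d j \<and> (x + y) mod N = (N div d k) mod N}"

definition Mmat :: "nat \<Rightarrow> (nat \<Rightarrow> nat) \<Rightarrow> nat \<Rightarrow> nat \<Rightarrow> nat \<Rightarrow> nat" where
  "Mmat N d i j k = acount N d i j k"

definition Wmat :: "nat \<Rightarrow> (nat \<Rightarrow> nat) \<Rightarrow> nat \<Rightarrow> nat \<Rightarrow> complex" where
  "Wmat N d j k = of_nat (totient (d j)) * ramanujan_sum (d k) (int (N div d j)) / of_nat (totient (d k))"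

definition Dmat :: "nat \<Rightarrow> (nat \<Rightarrow> nat) \<Rightarrow> nat \<Rightarrow> nat \<Rightarrow> nat \<Rightarrow> complex" where
  "Dmat N d i j k = (if j = k then Wmat N d i j else 0)"

definition Smat :: "nat \<Rightarrow> (nat \<Rightarrow> nat) \<Rightarrow> nat \<Rightarrow> nat \<Rightarrow> complex" where
  "Smat N d j k = ramanujan_sum (d j) (int (N div d k))"

definition lex_index :: "nat \<Rightarrow> nat \<Rightarrow> nat \<Rightarrow> nat" where
  "lex_index tn i i' = (i - 1) * tn + i'"

end

theory Submission
  imports Defs
begin

text \<open>
  By the Chinese remainder theorem, \<open>x \<mapsto> (x mod m, x mod n)\<close> identifies \<open>\<int>/mn\<close> with
  \<open>\<int>/m \<times> \<int>/n\<close>, and for a divisor \<open>f = d e\<close> of \<open>mn\<close> the condition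
  \<open>gcd(x, mn) = mn/f\<close> splits into \<open>gcd(x, m) = m/d\<close> and \<open>gcd(x, n) = n/e\<close>. Hence the
  pair counts defining \<open>M\<close> factor, once one knows that they do not change when the target
  \<open>z\<close> is multiplied by a unit; this moves the representative \<open>mn/f\<^sub>k\<close> of \<open>K\<^sub>k\<close> to
  \<open>m/d\<^sub>k\<close> modulo \<open>m\<close> and to \<open>n/e\<^sub>k\<close> modulo \<open>n\<close>. The same two facts for Ramanujan
  sums (multiplicativity in the modulus, invariance under unit multiples of the argument)
  together with multiplicativity of \<open>\<phi>\<close> factor \<open>W\<close>, and \<open>D\<close> is the diagonal of a row of
  \<open>W\<close>. Finally \<open>W = S\<close> is the symmetry \<open>\<phi>(d) c\<^sub>e(N/d) = \<phi>(e) c\<^sub>d(N/e)\<close> for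
  \<open>d, e | N\<close>: both sides are the double sum of \<open>exp(2\<pi>i abN/(de))\<close> over units \<open>a\<close>
  mod \<open>d\<close> and \<open>b\<close> mod \<open>e\<close>.
\<close>

section \<open>Divisors of a product of coprime numbers\<close>

lemma gcd_mult_coprime_right:
  fixes x m n :: nat
  assumes "coprime m n"
  shows "gcd x (m * n) = gcd x m * gcd x n"
proof (rule dvd_antisym)
  obtain a b where ab: "gcd x (m * n) = a * b" "a dvd m" "b dvd n"
    using division_decomp[of "gcd x (m * n)" m n] by auto
  have "a dvd x" "b dvd x"
    using ab by (metis dvd_mult_right dvd_mult_left gcd_dvd1 dvd_trans)+
  then show "gcd x (m * n) dvd gcd x m * gcd x n"
    using ab by (simp add: mult_dvd_mono)
next
  have "coprime (gcd x m) (gcd x n)"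
    using assms by (meson coprime_imp_coprime gcd_dvd2 dvd_trans)
  then have "gcd x m * gcd x n dvd x"
    by (simp add: divides_mult)
  moreover have "gcd x m * gcd x n dvd m * n"
    by (simp add: mult_dvd_mono)
  ultimately show "gcd x m * gcd x n dvd gcd x (m * n)"
    by simp
qed

lemma gcd_mult_dvd_coprime_left:
  fixes a b m n :: nat
  assumes "coprime m n" "a dvd m" "b dvd n"
  shows "gcd (a * b) m = a"
  by (metis assms coprime_mult_right_iff dvd_mult_div_cancel
      gcd_mult_left_right_cancel gcd_nat.order_iff)

lemma gcd_mult_coprime_eq_iff:
  fixes x g h m n :: nat
  assumes "coprime m n" "g dvd m" "h dvd n"
  shows "gcd x (m * n) = g * h \<longleftrightarrow> gcd x m = g \<and> gcd x n = h"
proof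
  assume "gcd x (m * n) = g * h"
  then have prod: "gcd x m * gcd x n = g * h"
    using gcd_mult_coprime_right[OF assms(1)] by simp
  have nm: "coprime n m"
    using assms(1) by (simp add: coprime_commute)
  have "gcd x m = gcd (gcd x m * gcd x n) m"
    using gcd_mult_dvd_coprime_left[OF assms(1)] by simp
  also have "\<dots> = g"
    using prod gcd_mult_dvd_coprime_left[OF assms] by simp
  finally have "gcd x m = g" .
  have "gcd x n = gcd (gcd x n * gcd x m) n"
    using gcd_mult_dvd_coprime_left[OF nm] by simp
  also have "\<dots> = h"
    using prod gcd_mult_dvd_coprime_left[OF nm assms(3,2)] by (simp add: mult.commute)
  finally show "gcd x m = g \<and> gcd x n = h"
    using \<open>gcd x m = g\<close> by simp
next
  assume "gcd x m = g \<and> gcd x n = h"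
  then show "gcd x (m * n) = g * h"
    using gcd_mult_coprime_right[OF assms(1)] by simp
qed

lemma div_dvd_self: "a dvd N \<Longrightarrow> N div a dvd (N :: nat)"
  by (metis dvd_mult_div_cancel dvd_triv_right)

lemma num_divisors_mult_coprime:
  assumes "coprime m n" "m > 0" "n > 0"
  shows "num_divisors (m * n) = num_divisors m * num_divisors n"
proof -
  have "bij_betw (\<lambda>(a, b). a * b) ({a. a dvd m} \<times> {b. b dvd n}) {c. c dvd m * n}"
  proof (rule bij_betwI[where g = "\<lambda>c. (gcd c m, gcd c n)"])
    show "(\<lambda>c. (gcd c m, gcd c n)) \<in> {c. c dvd m * n} \<rightarrow> {a. a dvd m} \<times> {b. b dvd n}"
      by auto
    show "(\<lambda>c. (gcd c m, gcd c n)) ((\<lambda>(a, b). a * b) p) = p"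
      if mem: "p \<in> {a. a dvd m} \<times> {b. b dvd n}" for p
    proof -
      obtain a b where p: "p = (a, b)" "a dvd m" "b dvd n"
        using mem by blast
      have "gcd (b * a) n = b"
        using assms(1) p by (intro gcd_mult_dvd_coprime_left) (simp_all add: coprime_commute)
      then show ?thesis
        using assms(1) p by (simp add: gcd_mult_dvd_coprime_left mult.commute)
    qed
    show "(\<lambda>(a, b). a * b) (gcd c m, gcd c n) = c" if "c \<in> {c. c dvd m * n}" for c
      using that gcd_mult_coprime_right[OF assms(1), of c] by (simp add: gcd_nat.absorb1)
  qed (auto simp: mult_dvd_mono)
  then show ?thesis
    unfolding num_divisors_def by (metis bij_betw_same_card card_cartesian_product)
qed

lemma divisor_ordering_dvd:
  "divisor_ordering N d \<Longrightarrow> i \<in> {1..num_divisors N} \<Longrightarrow> d i dvd N"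
  by (auto simp: divisor_ordering_def bij_betw_def)

lemma lex_index_eq_iff:
  assumes "1 \<le> i" "1 \<le> j" "i' \<in> {1..tn}" "j' \<in> {1..tn}"
  shows "lex_index tn i i' = lex_index tn j j' \<longleftrightarrow> i = j \<and> i' = j'"
proof
  assume "lex_index tn i i' = lex_index tn j j'"
  then have eq: "(i - 1) * tn + (i' - 1) = (j - 1) * tn + (j' - 1)"
    using assms by (simp add: lex_index_def)
  have digits: "(a * tn + r) div tn = a" "(a * tn + r) mod tn = r" if "r < tn" for a r :: nat
    using that by simp_all
  have "i' - 1 < tn" "j' - 1 < tn"
    using assms by auto
  then have "i - 1 = j - 1" "i' - 1 = j' - 1"
    using digits eq by metis+
  then show "i = j \<and> i' = j'"
    using assms by auto
qed simp

lemma lex_index_surj: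
  assumes "p \<in> {1..tm * tn}"
  obtains i i' where "i \<in> {1..tm}" "i' \<in> {1..tn}" "p = lex_index tn i i'"
proof
  have tn: "tn > 0"
    using assms by (cases tn) auto
  show "p = lex_index tn ((p - 1) div tn + 1) ((p - 1) mod tn + 1)"
    using assms by (simp add: lex_index_def)
  show "(p - 1) mod tn + 1 \<in> {1..tn}"
    using tn by (simp add: Suc_leI)
  have "p - 1 < tm * tn"
    using assms by auto
  then have "(p - 1) div tn < tm"
    using tn by (simp add: div_less_iff_less_mult)
  then show "(p - 1) div tn + 1 \<in> {1..tm}"
    by simp
qed

section \<open>Ramanujan sums\<close>

definition unity_root :: "nat \<Rightarrow> int \<Rightarrow> complex" where
  "unity_root N t = exp (2 * of_real pi * \<i> * of_int t / of_nat N)"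

definition unit_residues :: "nat \<Rightarrow> nat set" where
  "unit_residues N = {j. j < N \<and> coprime j N}"

lemma finite_unit_residues [simp]: "finite (unit_residues N)"
  by (simp add: unit_residues_def)

lemma unity_root_add_multiple:
  assumes "N > 0"
  shows "unity_root N (t + int N * k) = unity_root N t"
proof -
  have "2 * of_real pi * \<i> * of_int (t + int N * k) / of_nat N
        = 2 * of_real pi * \<i> * of_int t / of_nat N + 2 * of_int k * of_real pi * \<i>"
    using assms by (simp add: field_simps)
  moreover have "exp (2 * of_int k * of_real pi * \<i>) = 1"
    by (metis exp_2pi_1_int mult.assoc mult.commute)
  ultimately show ?thesis
    by (simp add: unity_root_def exp_add)
qed

lemma unity_root_cong:
  assumes "N > 0" "[t = t'] (mod int N)"
  shows "unity_root N t = unity_root N t'"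
  using assms unity_root_add_multiple by (metis cong_iff_lin)

lemma unity_root_mod:
  assumes "N > 0"
  shows "unity_root N (int (a mod N) * x) = unity_root N (int a * x)"
proof (rule unity_root_cong[OF assms])
  have "[int (a mod N) = int a] (mod int N)"
    by (simp add: cong_def zmod_int)
  then show "[int (a mod N) * x = int a * x] (mod int N)"
    by (rule cong_mult) simp
qed

lemma unity_root_eq:
  assumes "a > 0" "b > 0" "s * int b = t * int a"
  shows "unity_root a s = unity_root b t"
proof -
  have "(of_int s :: complex) * of_nat b = of_int t * of_nat a"
    by (metis assms(3) of_int_mult of_int_of_nat_eq)
  then have "(of_int s :: complex) / of_nat a = of_int t / of_nat b"
    using assms by (simp add: frac_eq_eq)
  then show ?thesis
    unfolding unity_root_def by (metis times_divide_eq_right)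
qed

lemma unity_root_mult:
  assumes "a > 0" "b > 0"
  shows "unity_root a s * unity_root b t = unity_root (a * b) (s * int b + t * int a)"
proof -
  have "2 * of_real pi * \<i> * of_int s / of_nat a + 2 * of_real pi * \<i> * of_int t / of_nat b
      = 2 * of_real pi * \<i> * of_int (s * int b + t * int a) / (of_nat (a * b) :: complex)"
    using assms by (simp add: field_simps)
  then show ?thesis
    by (simp add: unity_root_def exp_add[symmetric])
qed

text \<open>\<open>totatives N\<close> lies in \<open>{1..N}\<close>, so reduction mod \<open>N\<close> moves only \<open>N\<close> (to \<open>0\<close>).\<close>
lemma bij_betw_totatives_unit_residues:
  assumes "N > 0"
  shows "bij_betw (\<lambda>j. j mod N) (totatives N) (unit_residues N)"
proof (rule bij_betwI[where g = "\<lambda>r. if r = 0 then N else r"])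
  show "(\<lambda>j. j mod N) \<in> totatives N \<rightarrow> unit_residues N"
    using assms by (auto simp: unit_residues_def in_totatives_iff)
  show "(\<lambda>r. if r = 0 then N else r) \<in> unit_residues N \<rightarrow> totatives N"
    using assms by (auto simp: unit_residues_def in_totatives_iff)
  show "(if j mod N = 0 then N else j mod N) = j" if "j \<in> totatives N" for j
    using that by (auto simp: in_totatives_iff le_less)
  show "(if r = 0 then N else r) mod N = r" if "r \<in> unit_residues N" for r
    using that by (auto simp: unit_residues_def)
qed

lemma card_unit_residues:
  assumes "N > 0"
  shows "card (unit_residues N) = totient N"
  using bij_betw_same_card[OF bij_betw_totatives_unit_residues[OF assms]]
  by (simp add: totient_def)

lemma ramanujan_sum_unit_residues:
  assumes "N > 0"
  shows "ramanujan_sum N x = (\<Sum>j\<in>unit_residues N. unity_root N (int j * x))"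
proof -
  have "{j \<in> {1..N}. coprime j N} = totatives N"
    by (auto simp: in_totatives_iff)
  then have "ramanujan_sum N x = (\<Sum>j\<in>totatives N. unity_root N (int j * x))"
    by (simp add: ramanujan_sum_def unity_root_def)
  also have "\<dots> = (\<Sum>j\<in>totatives N. unity_root N (int (j mod N) * x))"
    by (simp add: unity_root_mod[OF assms])
  also have "\<dots> = (\<Sum>j\<in>unit_residues N. unity_root N (int j * x))"
    by (rule sum.reindex_bij_betw[OF bij_betw_totatives_unit_residues[OF assms]])
  finally show ?thesis .
qed

lemma ramanujan_sum_cong:
  assumes "N > 0" "[x = x'] (mod int N)"
  shows "ramanujan_sum N x = ramanujan_sum N x'"
  unfolding ramanujan_sum_unit_residues[OF assms(1)]
  by (intro sum.cong refl unity_root_cong[OF assms(1)] cong_mult[OF cong_refl assms(2)])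

lemma bij_betw_unit_residues_mult_coprime:
  assumes "N > 0" "coprime u N"
  shows "bij_betw (\<lambda>j. j * u mod N) (unit_residues N) (unit_residues N)"
proof -
  have inj: "inj_on (\<lambda>j. j * u mod N) (unit_residues N)"
  proof
    fix j j' assume "j \<in> unit_residues N" "j' \<in> unit_residues N" "j * u mod N = j' * u mod N"
    then have "[j * u = j' * u] (mod N)" "j < N" "j' < N"
      by (auto simp: unit_residues_def cong_def)
    then show "j = j'"
      using cong_mult_rcancel_nat[OF assms(2)] by (auto simp: cong_def)
  qed
  moreover have "(\<lambda>j. j * u mod N) ` unit_residues N \<subseteq> unit_residues N"
    using assms by (auto simp: unit_residues_def)
  ultimately show ?thesis
    by (simp add: bij_betw_def endo_inj_surj)
qed

lemma ramanujan_sum_mult_coprime_arg: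
  assumes "N > 0" "coprime u N"
  shows "ramanujan_sum N (int u * x) = ramanujan_sum N x"
proof -
  have "ramanujan_sum N (int u * x) = (\<Sum>j\<in>unit_residues N. unity_root N (int (j * u mod N) * x))"
    by (simp add: ramanujan_sum_unit_residues[OF assms(1)] unity_root_mod[OF assms(1)] mult.assoc)
  also have "\<dots> = ramanujan_sum N x"
    unfolding ramanujan_sum_unit_residues[OF assms(1)]
    by (rule sum.reindex_bij_betw[OF bij_betw_unit_residues_mult_coprime[OF assms]])
  finally show ?thesis .
qed

lemma bij_betw_unit_residues_coprime_mult:
  assumes "coprime a b" "a > 0" "b > 0"
  shows "bij_betw (\<lambda>(l1, l2). (l1 * b + l2 * a) mod (a * b))
           (unit_residues a \<times> unit_residues b) (unit_residues (a * b))"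
proof -
  let ?h = "\<lambda>(l1, l2). (l1 * b + l2 * a) mod (a * b)"
  have mod_a: "(l1 * b + l2 * a) mod (a * b) mod a = l1 * b mod a"
    and mod_b: "(l1 * b + l2 * a) mod (a * b) mod b = l2 * a mod b" for l1 l2
    by (simp_all add: mod_mod_cancel)
  have ba: "coprime b a"
    using assms(1) by (simp add: coprime_commute)
  have inj: "inj_on ?h (unit_residues a \<times> unit_residues b)"
  proof (rule inj_onI, clarify)
    fix l1 l2 l1' l2'
    assume mem: "l1 \<in> unit_residues a" "l2 \<in> unit_residues b"
      "l1' \<in> unit_residues a" "l2' \<in> unit_residues b"
      and eq: "(l1 * b + l2 * a) mod (a * b) = (l1' * b + l2' * a) mod (a * b)"
    have "[l1 * b = l1' * b] (mod a)" "[l2 * a = l2' * a] (mod b)"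
      using arg_cong[OF eq, of "\<lambda>r. r mod a"] arg_cong[OF eq, of "\<lambda>r. r mod b"]
      by (simp_all add: mod_a mod_b cong_def)
    then have "[l1 = l1'] (mod a)" "[l2 = l2'] (mod b)"
      using cong_mult_rcancel_nat ba assms(1) by blast+
    then show "l1 = l1' \<and> l2 = l2'"
      using mem by (simp add: cong_def unit_residues_def)
  qed
  have into: "?h ` (unit_residues a \<times> unit_residues b) \<subseteq> unit_residues (a * b)"
  proof clarify
    fix l1 l2 assume mem: "l1 \<in> unit_residues a" "l2 \<in> unit_residues b"
    let ?r = "(l1 * b + l2 * a) mod (a * b)"
    have "coprime (?r mod a) a" "coprime (?r mod b) b"
      using mem ba assms(1) by (simp_all add: mod_a mod_b unit_residues_def)
    then have "coprime ?r (a * b)"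
      using assms(2,3) by simp
    then show "?r \<in> unit_residues (a * b)"
      using assms(2,3) by (simp add: unit_residues_def)
  qed
  have "card (?h ` (unit_residues a \<times> unit_residues b)) = card (unit_residues (a * b))"
    using assms by (simp add: card_image[OF inj] card_cartesian_product card_unit_residues
        totient_mult_coprime)
  then show ?thesis
    using inj into by (simp add: bij_betw_def card_subset_eq)
qed

lemma ramanujan_sum_coprime_mult:
  assumes "coprime a b" "a > 0" "b > 0"
  shows "ramanujan_sum (a * b) x = ramanujan_sum a x * ramanujan_sum b x"
proof -
  let ?h = "\<lambda>(l1, l2). (l1 * b + l2 * a) mod (a * b)"
  have ab: "a * b > 0"
    using assms by simp
  have "ramanujan_sum a x * ramanujan_sum b x
      = (\<Sum>(l1, l2)\<in>unit_residues a \<times> unit_residues b.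
           unity_root a (int l1 * x) * unity_root b (int l2 * x))"
    by (simp add: ramanujan_sum_unit_residues assms sum_product sum.cartesian_product)
  also have "\<dots> = (\<Sum>p\<in>unit_residues a \<times> unit_residues b. unity_root (a * b) (int (?h p) * x))"
  proof -
    have "unity_root a (int l1 * x) * unity_root b (int l2 * x)
        = unity_root (a * b) (int (?h (l1, l2)) * x)" for l1 l2
      unfolding unity_root_mult[OF assms(2,3)] case_prod_conv unity_root_mod[OF ab]
      by (simp add: algebra_simps)
    then show ?thesis
      by (intro sum.cong) auto
  qed
  also have "\<dots> = ramanujan_sum (a * b) x"
    unfolding ramanujan_sum_unit_residues[OF ab]
    by (rule sum.reindex_bij_betw[OF bij_betw_unit_residues_coprime_mult[OF assms]])
  finally show ?thesis ..
qed

lemma coprime_representative_exists: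
  fixes j d e :: nat
  assumes "coprime j d" "e > 0"
  obtains j' where "[j' = j] (mod d)" "coprime j' e"
proof -
  define t where "t = \<Prod>{p \<in> prime_factors e. \<not> p dvd j}"
  have dvd_t: "p dvd t \<longleftrightarrow> \<not> p dvd j" if "prime p" "p dvd e" for p
  proof -
    have "p dvd t \<longleftrightarrow> (\<exists>q \<in> {p \<in> prime_factors e. \<not> p dvd j}. p dvd q)"
      unfolding t_def using that(1) by (simp add: prime_dvd_prod_iff)
    also have "\<dots> \<longleftrightarrow> \<not> p dvd j"
    proof
      assume "\<exists>q \<in> {p \<in> prime_factors e. \<not> p dvd j}. p dvd q"
      then obtain q where q: "prime q" "\<not> q dvd j" "p dvd q"
        by (auto simp: in_prime_factors_iff)
      then show "\<not> p dvd j"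
        using primes_dvd_imp_eq[OF that(1) q(1)] by simp
    next
      assume "\<not> p dvd j"
      then show "\<exists>q \<in> {p \<in> prime_factors e. \<not> p dvd j}. p dvd q"
        using that assms(2) by (auto simp: in_prime_factors_iff)
    qed
    finally show ?thesis .
  qed
  have not_dvd: "\<not> p dvd j + d * t" if "prime p" "p dvd e" for p
  proof (cases "p dvd j")
    case True
    then have "\<not> p dvd d"
      using coprime_common_divisor[OF assms(1) True] that(1) by auto
    then have "\<not> p dvd d * t"
      using True dvd_t[OF that] that(1) by (simp add: prime_dvd_mult_iff)
    then show ?thesis
      using True by (simp add: dvd_add_right_iff)
  next
    case False
    then have "p dvd d * t"
      using dvd_t[OF that] by simp
    then show ?thesis
      using False by (simp add: dvd_add_left_iff)
  qed
  have "coprime (j + d * t) e"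
  proof (rule coprimeI)
    fix c assume c: "c dvd j + d * t" "c dvd e"
    show "is_unit c"
    proof (rule ccontr)
      assume "\<not> is_unit c"
      then obtain p where "prime p" "p dvd c"
        using prime_factor_nat[of c] by auto
      then show False
        using not_dvd c dvd_trans by blast
    qed
  qed
  moreover have "[j + d * t = j] (mod d)"
    by (simp add: cong_def)
  ultimately show thesis
    using that by blast
qed

lemma ramanujan_sum_coprime_mult_cofactor:
  assumes "N > 0" "d dvd N" "e dvd N" "coprime a d"
  shows "ramanujan_sum e (int a * int (N div d)) = ramanujan_sum e (int (N div d))"
proof -
  have e0: "e > 0"
    using dvd_pos_nat[OF assms(1,3)] .
  obtain a' where a': "[a' = a] (mod d)" "coprime a' e"
    using coprime_representative_exists[OF assms(4) e0] by blast
  have "[int a' = int a] (mod int d)"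
    using a'(1) by (simp add: cong_int_iff)
  then obtain k where k: "int a = int a' + int d * k"
    using cong_iff_lin by blast
  obtain r where r: "N = e * r"
    using assms(3) by blast
  have "int d * int (N div d) = int N"
    using assms(2) by (metis dvd_mult_div_cancel of_nat_mult)
  then have "int a * int (N div d) = int a' * int (N div d) + int e * (int r * k)"
    using k r by (simp add: algebra_simps)
  then have "[int a' * int (N div d) = int a * int (N div d)] (mod int e)"
    using cong_iff_lin by blast
  then have "[int a * int (N div d) = int a' * int (N div d)] (mod int e)"
    by (rule cong_sym)
  then have "ramanujan_sum e (int a * int (N div d)) = ramanujan_sum e (int a' * int (N div d))"
    by (rule ramanujan_sum_cong[OF e0])
  also have "\<dots> = ramanujan_sum e (int (N div d))"
    by (rule ramanujan_sum_mult_coprime_arg[OF e0 a'(2)])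
  finally show ?thesis .
qed

lemma totient_mult_ramanujan_sum_swap:
  assumes "N > 0" "d dvd N" "e dvd N"
  shows "of_nat (totient d) * ramanujan_sum e (int (N div d))
       = of_nat (totient e) * ramanujan_sum d (int (N div e))"
proof -
  have d0: "d > 0" and e0: "e > 0"
    using dvd_pos_nat[OF assms(1)] assms(2,3) by auto
  define q where "q = N div d"
  define r where "r = N div e"
  have qr: "q * d = r * e"
    using assms unfolding q_def r_def by simp
  have "of_nat (totient d) * ramanujan_sum e (int q)
      = (\<Sum>a\<in>unit_residues d. ramanujan_sum e (int a * int q))"
  proof -
    have "ramanujan_sum e (int a * int q) = ramanujan_sum e (int q)" if "a \<in> unit_residues d" for a
      using that ramanujan_sum_coprime_mult_cofactor[OF assms] by (simp add: unit_residues_def q_def)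
    then show ?thesis
      by (simp add: card_unit_residues[OF d0])
  qed
  also have "\<dots> = (\<Sum>a\<in>unit_residues d. \<Sum>b\<in>unit_residues e. unity_root e (int b * (int a * int q)))"
    by (simp add: ramanujan_sum_unit_residues[OF e0])
  also have "\<dots> = (\<Sum>b\<in>unit_residues e. \<Sum>a\<in>unit_residues d. unity_root d (int a * (int b * int r)))"
  proof -
    have "unity_root e (int b * (int a * int q)) = unity_root d (int a * (int b * int r))" for a b
    proof (rule unity_root_eq[OF e0 d0])
      show "int b * (int a * int q) * int d = int a * (int b * int r) * int e"
        using arg_cong[OF qr, of "\<lambda>x. int (a * b * x)"] by (simp add: algebra_simps)
    qed
    then show ?thesis
      by (subst sum.swap) simp
  qed
  also have "\<dots> = (\<Sum>b\<in>unit_residues e. ramanujan_sum d (int b * int r))"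
    by (simp add: ramanujan_sum_unit_residues[OF d0])
  also have "\<dots> = of_nat (totient e) * ramanujan_sum d (int r)"
  proof -
    have "ramanujan_sum d (int b * int r) = ramanujan_sum d (int r)" if "b \<in> unit_residues e" for b
      using that ramanujan_sum_coprime_mult_cofactor[OF assms(1,3,2)] by (simp add: unit_residues_def r_def)
    then show ?thesis
      by (simp add: card_unit_residues[OF e0])
  qed
  finally show ?thesis
    unfolding q_def r_def .
qed

lemma ramanujan_sum_coprime_mult_units:
  assumes "coprime a b" "a > 0" "b > 0" "coprime a y" "coprime x b"
  shows "ramanujan_sum (a * b) (int x * int y) = ramanujan_sum a (int x) * ramanujan_sum b (int y)"
proof -
  have "ramanujan_sum (a * b) (int x * int y)
      = ramanujan_sum a (int y * int x) * ramanujan_sum b (int x * int y)"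
    using ramanujan_sum_coprime_mult[OF assms(1-3)] by (simp add: mult.commute)
  also have "\<dots> = ramanujan_sum a (int x) * ramanujan_sum b (int y)"
    using ramanujan_sum_mult_coprime_arg assms by (simp add: coprime_commute)
  finally show ?thesis .
qed

section \<open>Pairs of residues with prescribed gcds and sum\<close>

definition gcd_sum_pairs :: "nat \<Rightarrow> nat \<Rightarrow> nat \<Rightarrow> nat \<Rightarrow> (nat \<times> nat) set" where
  "gcd_sum_pairs N g h z =
     {(x, y). x < N \<and> y < N \<and> gcd x N = g \<and> gcd y N = h \<and> (x + y) mod N = z mod N}"

lemma acount_eq_card_gcd_sum_pairs:
  "acount N d i j k = card (gcd_sum_pairs N (N div d i) (N div d j) (N div d k))"
  unfolding acount_def Kset_def gcd_sum_pairs_def by (rule arg_cong[where f = card]) auto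

lemma finite_gcd_sum_pairs [simp]: "finite (gcd_sum_pairs N g h z)"
  by (rule finite_subset[of _ "{..<N} \<times> {..<N}"]) (auto simp: gcd_sum_pairs_def)

lemma gcd_sum_pairs_mod [simp]: "gcd_sum_pairs N g h (z mod N) = gcd_sum_pairs N g h z"
  by (simp add: gcd_sum_pairs_def)

lemma card_gcd_sum_pairs_le_mult:
  assumes "N > 0" "coprime u N"
  shows "card (gcd_sum_pairs N g h z) \<le> card (gcd_sum_pairs N g h (u * z))"
proof -
  let ?mu = "\<lambda>x. u * x mod N"
  have inj_mu: "inj_on ?mu {..<N}"
  proof
    fix x x' assume "x \<in> {..<N}" "x' \<in> {..<N}" "?mu x = ?mu x'"
    then have "[x * u = x' * u] (mod N)" "x < N" "x' < N"
      by (auto simp: cong_def mult.commute)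
    then show "x = x'"
      using cong_mult_rcancel_nat[OF assms(2)] by (auto simp: cong_def)
  qed
  have "inj_on (map_prod ?mu ?mu) (gcd_sum_pairs N g h z)"
    by (rule inj_on_subset[OF map_prod_inj_on[OF inj_mu inj_mu]]) (auto simp: gcd_sum_pairs_def)
  moreover have "map_prod ?mu ?mu ` gcd_sum_pairs N g h z \<subseteq> gcd_sum_pairs N g h (u * z)"
  proof
    fix q assume "q \<in> map_prod ?mu ?mu ` gcd_sum_pairs N g h z"
    then obtain x y where xy: "(x, y) \<in> gcd_sum_pairs N g h z" and q: "q = (?mu x, ?mu y)"
      by auto
    have gcd_xy: "gcd x N = g" "gcd y N = h" and sum: "(x + y) mod N = z mod N"
      using xy by (auto simp: gcd_sum_pairs_def)
    have "coprime N u"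
      using assms(2) by (simp add: coprime_commute)
    then have gcd_mu: "gcd (?mu w) N = gcd w N" for w
      using assms(1) gcd_mult_left_left_cancel[of N u w] by simp
    have "(?mu x + ?mu y) mod N = u * (x + y) mod N"
      by (simp add: mod_add_eq distrib_left)
    also have "\<dots> = u * ((x + y) mod N) mod N"
      by (simp add: mod_mult_right_eq)
    also have "\<dots> = u * z mod N"
      by (simp add: sum mod_mult_right_eq)
    finally show "q \<in> gcd_sum_pairs N g h (u * z)"
      using q gcd_xy gcd_mu assms(1) by (simp add: gcd_sum_pairs_def)
  qed
  ultimately show ?thesis
    by (rule card_inj_on_le) simp
qed

lemma card_gcd_sum_pairs_mult_coprime:
  assumes "N > 0" "coprime u N"
  shows "card (gcd_sum_pairs N g h (u * z)) = card (gcd_sum_pairs N g h z)"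
proof -
  obtain v where v: "[u * v = 1] (mod N)"
    using cong_solve_coprime_nat[OF assms(2)] by auto
  have "coprime (u * v) N"
    using cong_imp_coprime[OF cong_sym[OF v]] by simp
  then have v_coprime: "coprime v N"
    by simp
  have "[v * (u * z) = z] (mod N)"
    using cong_scalar_right[OF v, of z] by (simp add: mult_ac)
  then have "v * (u * z) mod N = z mod N"
    by (simp add: cong_def)
  then have "gcd_sum_pairs N g h (v * (u * z)) = gcd_sum_pairs N g h z"
    using gcd_sum_pairs_mod[of N g h "v * (u * z)"] gcd_sum_pairs_mod[of N g h z] by simp
  then have "card (gcd_sum_pairs N g h (u * z)) \<le> card (gcd_sum_pairs N g h z)"
    using card_gcd_sum_pairs_le_mult[OF assms(1) v_coprime, of g h "u * z"] by simp
  then show ?thesis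
    using card_gcd_sum_pairs_le_mult[OF assms, of g h z] by linarith
qed

lemma bij_betw_mod_coprime_mult:
  fixes m n :: nat
  assumes "coprime m n" "m > 0" "n > 0"
  shows "bij_betw (\<lambda>x. (x mod m, x mod n)) {..<m * n} ({..<m} \<times> {..<n})"
proof -
  have "inj_on (\<lambda>x. (x mod m, x mod n)) {..<m * n}"
  proof
    fix x x' assume less: "x \<in> {..<m * n}" "x' \<in> {..<m * n}"
      and "(x mod m, x mod n) = (x' mod m, x' mod n)"
    then have "[x = x'] (mod m * n)"
      by (intro coprime_cong_mult_nat[OF _ _ assms(1)]) (simp_all add: cong_def)
    then show "x = x'"
      using less by (simp add: cong_def)
  qed
  moreover have "(a, b) \<in> (\<lambda>x. (x mod m, x mod n)) ` {..<m * n}" if "a < m" "b < n" for a b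
  proof -
    obtain x where "x < m * n" "[x = a] (mod m)" "[x = b] (mod n)"
      using binary_chinese_remainder_unique_nat[OF assms(1), of a b] assms(2,3) by auto
    then show ?thesis
      using that by (auto simp: cong_def)
  qed
  ultimately show ?thesis
    using assms by (auto simp: bij_betw_def)
qed

lemma mod_mult_coprime_eq_iff:
  fixes a b m n :: nat
  assumes "coprime m n"
  shows "a mod (m * n) = b mod (m * n) \<longleftrightarrow> a mod m = b mod m \<and> a mod n = b mod n"
proof
  assume "a mod (m * n) = b mod (m * n)"
  then show "a mod m = b mod m \<and> a mod n = b mod n"
    by (metis mod_mod_cancel dvd_triv_left dvd_triv_right)
next
  assume "a mod m = b mod m \<and> a mod n = b mod n"
  then show "a mod (m * n) = b mod (m * n)"
    using coprime_cong_mult_nat[OF _ _ assms, of a b] by (simp add: cong_def)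
qed

lemma mem_gcd_sum_pairs_coprime_mult_iff:
  assumes "coprime m n" "m > 0" "n > 0" "g1 dvd m" "g2 dvd m" "h1 dvd n" "h2 dvd n"
  shows "(x, y) \<in> gcd_sum_pairs (m * n) (g1 * h1) (g2 * h2) z \<longleftrightarrow>
           x < m * n \<and> y < m * n \<and>
           (x mod m, y mod m) \<in> gcd_sum_pairs m g1 g2 z \<and>
           (x mod n, y mod n) \<in> gcd_sum_pairs n h1 h2 z"
proof -
  have "gcd x (m * n) = g1 * h1 \<longleftrightarrow> gcd (x mod m) m = g1 \<and> gcd (x mod n) n = h1"
    using gcd_mult_coprime_eq_iff[OF assms(1,4,6)] assms(2,3) by simp
  moreover have "gcd y (m * n) = g2 * h2 \<longleftrightarrow> gcd (y mod m) m = g2 \<and> gcd (y mod n) n = h2"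
    using gcd_mult_coprime_eq_iff[OF assms(1,5,7)] assms(2,3) by simp
  moreover have "(x + y) mod (m * n) = z mod (m * n) \<longleftrightarrow>
      (x mod m + y mod m) mod m = z mod m \<and> (x mod n + y mod n) mod n = z mod n"
    using mod_mult_coprime_eq_iff[OF assms(1)] by (simp add: mod_add_eq)
  ultimately show ?thesis
    using assms(2,3) by (simp add: gcd_sum_pairs_def) blast
qed

lemma card_gcd_sum_pairs_coprime_mult:
  assumes "coprime m n" "m > 0" "n > 0" "g1 dvd m" "g2 dvd m" "h1 dvd n" "h2 dvd n"
  shows "card (gcd_sum_pairs (m * n) (g1 * h1) (g2 * h2) z)
       = card (gcd_sum_pairs m g1 g2 z) * card (gcd_sum_pairs n h1 h2 z)"
proof -
  let ?P = "\<lambda>(x, y). ((x mod m, y mod m), (x mod n, y mod n))"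
  let ?Gmn = "gcd_sum_pairs (m * n) (g1 * h1) (g2 * h2) z"
  let ?Gm = "gcd_sum_pairs m g1 g2 z" and ?Gn = "gcd_sum_pairs n h1 h2 z"
  have crt: "bij_betw (\<lambda>x. (x mod m, x mod n)) {..<m * n} ({..<m} \<times> {..<n})"
    by (rule bij_betw_mod_coprime_mult[OF assms(1-3)])
  have swap: "bij_betw (\<lambda>((a, b), (c, e)). ((a, c), (b, e))) ((A \<times> B) \<times> (A \<times> B)) ((A \<times> A) \<times> (B \<times> B))"
    for A B :: "nat set"
    by (rule bij_betwI[where g = "\<lambda>((a, c), (b, e)). ((a, b), (c, e))"]) auto
  have "?P = (\<lambda>((a, b), (c, e)). ((a, c), (b, e))) \<circ>
             map_prod (\<lambda>x. (x mod m, x mod n)) (\<lambda>x. (x mod m, x mod n))"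
    by auto
  then have "bij_betw ?P ({..<m * n} \<times> {..<m * n}) (({..<m} \<times> {..<m}) \<times> ({..<n} \<times> {..<n}))"
    using bij_betw_trans[OF bij_betw_map_prod[OF crt crt] swap] by simp
  then have "bij_betw ?P {p \<in> {..<m * n} \<times> {..<m * n}. ?P p \<in> ?Gm \<times> ?Gn}
      {q \<in> ({..<m} \<times> {..<m}) \<times> ({..<n} \<times> {..<n}). q \<in> ?Gm \<times> ?Gn}"
    by (rule bij_betw_Collect) simp
  moreover have "{p \<in> {..<m * n} \<times> {..<m * n}. ?P p \<in> ?Gm \<times> ?Gn} = ?Gmn"
  proof (rule Set.set_eqI)
    fix p :: "nat \<times> nat"
    obtain x y where "p = (x, y)"
      by fastforce
    then show "p \<in> {p \<in> {..<m * n} \<times> {..<m * n}. ?P p \<in> ?Gm \<times> ?Gn} \<longleftrightarrow> p \<in> ?Gmn"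
      by (simp add: mem_gcd_sum_pairs_coprime_mult_iff[OF assms])
  qed
  moreover have "{q \<in> ({..<m} \<times> {..<m}) \<times> ({..<n} \<times> {..<n}). q \<in> ?Gm \<times> ?Gn} = ?Gm \<times> ?Gn"
    by (auto simp: gcd_sum_pairs_def)
  ultimately have "bij_betw ?P ?Gmn (?Gm \<times> ?Gn)"
    by simp
  then show ?thesis
    by (simp add: bij_betw_same_card card_cartesian_product)
qed

section \<open>The matrices of a coprime product\<close>

lemma Wmat_coprime_mult:
  assumes "coprime m n" "m > 0" "n > 0" "d j dvd m" "d k dvd m" "e j' dvd n" "e k' dvd n"
    and "f J = d j * e j'" "f K = d k * e k'"
  shows "Wmat (m * n) f J K = Wmat m d j k * Wmat n e j' k'"
proof -
  have "m div d j dvd m" "n div e j' dvd n"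
    using assms(4,6) by (simp_all add: div_dvd_self)
  then have "coprime (d k) (n div e j')" "coprime (m div d j) (e k')"
    using coprime_divisors[OF assms(5) _ assms(1)] coprime_divisors[OF _ assms(7) assms(1)]
    by simp_all
  then have "ramanujan_sum (d k * e k') (int (m div d j) * int (n div e j'))
      = ramanujan_sum (d k) (int (m div d j)) * ramanujan_sum (e k') (int (n div e j'))"
    using coprime_divisors[OF assms(5,7,1)] dvd_pos_nat[OF assms(2,5)] dvd_pos_nat[OF assms(3,7)]
    by (simp add: ramanujan_sum_coprime_mult_units)
  moreover have "(m * n) div (d j * e j') = (m div d j) * (n div e j')"
    using assms(4,6) by (simp add: div_mult_div_if_dvd)
  moreover have "totient (d j * e j') = totient (d j) * totient (e j')"
    "totient (d k * e k') = totient (d k) * totient (e k')"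
    using coprime_divisors[OF assms(4,6,1)] coprime_divisors[OF assms(5,7,1)]
    by (simp_all add: totient_mult_coprime)
  ultimately show ?thesis
    using assms(8,9) by (simp add: Wmat_def)
qed

lemma Mmat_coprime_mult:
  assumes "coprime m n" "m > 0" "n > 0"
    and "d i dvd m" "d j dvd m" "d k dvd m" "e i' dvd n" "e j' dvd n" "e k' dvd n"
    and "f I = d i * e i'" "f J = d j * e j'" "f K = d k * e k'"
  shows "Mmat (m * n) f I J K = Mmat m d i j k * Mmat n e i' j' k'"
proof -
  have split: "(m * n) div (d l * e l') = (m div d l) * (n div e l')"
    if "d l dvd m" "e l' dvd n" for l l'
    using that by (simp add: div_mult_div_if_dvd)
  let ?z = "(m div d k) * (n div e k')"
  have "Mmat (m * n) f I J K
      = card (gcd_sum_pairs m (m div d i) (m div d j) ?z) * card (gcd_sum_pairs n (n div e i') (n div e j') ?z)"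
    using assms by (simp add: Mmat_def acount_eq_card_gcd_sum_pairs split div_dvd_self
        card_gcd_sum_pairs_coprime_mult)
  also have "card (gcd_sum_pairs m (m div d i) (m div d j) ?z)
      = card (gcd_sum_pairs m (m div d i) (m div d j) (m div d k))"
  proof -
    have "coprime m (n div e k')"
      by (rule coprime_divisors[OF dvd_refl div_dvd_self[OF assms(9)] assms(1)])
    then have "coprime (n div e k') m"
      by (simp add: coprime_commute)
    from card_gcd_sum_pairs_mult_coprime[OF assms(2) this] show ?thesis
      by (simp add: mult.commute)
  qed
  also have "card (gcd_sum_pairs n (n div e i') (n div e j') ?z)
      = card (gcd_sum_pairs n (n div e i') (n div e j') (n div e k'))"
  proof -
    have "coprime (m div d k) n"
      by (rule coprime_divisors[OF div_dvd_self[OF assms(6)] dvd_refl assms(1)])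
    from card_gcd_sum_pairs_mult_coprime[OF assms(3) this] show ?thesis .
  qed
  finally show ?thesis
    by (simp add: Mmat_def acount_eq_card_gcd_sum_pairs)
qed

lemma Wmat_eq_Smat:
  assumes "N > 0" "f j dvd N" "f k dvd N"
  shows "Wmat N f j k = Smat N f j k"
proof -
  have "totient (f k) > 0"
    using dvd_pos_nat[OF assms(1,3)] by simp
  then show ?thesis
    using totient_mult_ramanujan_sum_swap[OF assms(1,2,3)]
    by (simp add: Wmat_def Smat_def field_simps)
qed

theorem mainTheorem6:
  fixes m n :: nat and d e f :: "nat \<Rightarrow> nat"
  assumes "m \<ge> 1" and "n \<ge> 1" and "coprime m n"
    and "divisor_ordering m d" and "divisor_ordering n e"
    and "\<forall>i\<in>{1..num_divisors m}. \<forall>i'\<in>{1..num_divisors n}.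
           f (lex_index (num_divisors n) i i') = d i * e i'"
  shows "(\<forall>i\<in>{1..num_divisors m}. \<forall>j\<in>{1..num_divisors m}. \<forall>k\<in>{1..num_divisors m}.
          \<forall>i'\<in>{1..num_divisors n}. \<forall>j'\<in>{1..num_divisors n}. \<forall>k'\<in>{1..num_divisors n}.
            Mmat (m * n) f (lex_index (num_divisors n) i i')
                 (lex_index (num_divisors n) j j') (lex_index (num_divisors n) k k')
              = Mmat m d i j k * Mmat n e i' j' k'
          \<and> Dmat (m * n) f (lex_index (num_divisors n) i i')
                 (lex_index (num_divisors n) j j') (lex_index (num_divisors n) k k')
              = Dmat m d i j k * Dmat n e i' j' k'
          \<and> Wmat (m * n) f (lex_index (num_divisors n) j j') (lex_index (num_divisors n) k k')
              = Wmat m d j k * Wmat n e j' k')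
       \<and> (\<forall>j\<in>{1..num_divisors (m * n)}. \<forall>k\<in>{1..num_divisors (m * n)}.
            Wmat (m * n) f j k = Smat (m * n) f j k)"
proof -
  let ?\<sigma> = "lex_index (num_divisors n)"
  have mn: "m > 0" "n > 0"
    using assms(1,2) by auto
  note d = divisor_ordering_dvd[OF assms(4)] and e = divisor_ordering_dvd[OF assms(5)]
  have f_lex: "f (?\<sigma> i i') = d i * e i'"
    if "i \<in> {1..num_divisors m}" "i' \<in> {1..num_divisors n}" for i i'
    using assms(6) that by blast
  have W: "Wmat (m * n) f (?\<sigma> j j') (?\<sigma> k k') = Wmat m d j k * Wmat n e j' k'"
    if "j \<in> {1..num_divisors m}" "k \<in> {1..num_divisors m}"
       "j' \<in> {1..num_divisors n}" "k' \<in> {1..num_divisors n}" for j k j' k'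
    by (rule Wmat_coprime_mult[where d = d and e = e and f = f, OF assms(3) mn
          d[OF that(1)] d[OF that(2)] e[OF that(3)] e[OF that(4)]
          f_lex[OF that(1,3)] f_lex[OF that(2,4)]])
  have f: "f J dvd m * n" if "J \<in> {1..num_divisors (m * n)}" for J
  proof -
    have "J \<in> {1..num_divisors m * num_divisors n}"
      using that num_divisors_mult_coprime[OF assms(3) mn] by simp
    then obtain i i' where "i \<in> {1..num_divisors m}" "i' \<in> {1..num_divisors n}" "J = ?\<sigma> i i'"
      by (rule lex_index_surj)
    then show ?thesis
      using f_lex d e by (simp add: mult_dvd_mono)
  qed
  show ?thesis
  proof (intro conjI ballI)
    fix i j k i' j' k'
    assume ijk: "i \<in> {1..num_divisors m}" "j \<in> {1..num_divisors m}" "k \<in> {1..num_divisors m}"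
      and ijk': "i' \<in> {1..num_divisors n}" "j' \<in> {1..num_divisors n}" "k' \<in> {1..num_divisors n}"
    show "Mmat (m * n) f (?\<sigma> i i') (?\<sigma> j j') (?\<sigma> k k') = Mmat m d i j k * Mmat n e i' j' k'"
      by (rule Mmat_coprime_mult[where d = d and e = e and f = f, OF assms(3) mn
            d[OF ijk(1)] d[OF ijk(2)] d[OF ijk(3)] e[OF ijk'(1)] e[OF ijk'(2)] e[OF ijk'(3)]
            f_lex[OF ijk(1) ijk'(1)] f_lex[OF ijk(2) ijk'(2)] f_lex[OF ijk(3) ijk'(3)]])
    show "Wmat (m * n) f (?\<sigma> j j') (?\<sigma> k k') = Wmat m d j k * Wmat n e j' k'"
      by (rule W[OF ijk(2,3) ijk'(2,3)])
    have "?\<sigma> j j' = ?\<sigma> k k' \<longleftrightarrow> j = k \<and> j' = k'"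
      using ijk(2,3) ijk'(2,3) by (intro lex_index_eq_iff) auto
    then show "Dmat (m * n) f (?\<sigma> i i') (?\<sigma> j j') (?\<sigma> k k') = Dmat m d i j k * Dmat n e i' j' k'"
      using W[OF ijk(1,2) ijk'(1,2)] by (auto simp: Dmat_def)
  next
    fix j k assume "j \<in> {1..num_divisors (m * n)}" "k \<in> {1..num_divisors (m * n)}"
    then show "Wmat (m * n) f j k = Smat (m * n) f j k"
      using mn by (intro Wmat_eq_Smat f) auto
  qed
qed

end
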